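(* Let $N\ge 2$ agents communicate over a fixed, undirected, connected graph; let $\mathcal N_i\neq\emptyset$ be the neighbor set of agent $i$. Fix weights $w_1,w_2,w_3>0$, a sampling period $h>0$, constants $d>0$, $\nu>0$, arbitrary initial values $\delta^0_{i,1},\dot\delta^0_{i,1}\in\mathbb R$, and real numbers $\alpha_i^k$ ($i=1,\dots,N$, $k\ge1$) satisfying \[ |\alpha_i^k|\le d\,e^{-\nu k h}\qquad\text{for all } i \text{ and all } k\ge 1 . \] Let the sequences $\delta^k_{i,0},\dot\delta^k_{i,0},u^k_{i,0},\delta^k_{i,1},\dot\delta^k_{i,1}$ ($k\ge1$) be generated by the unconstrained one-step distributed MPC scheme described in the context. Then, for all sufficiently small $h>0$, there exist $r_h\in(0,1)$, $M_0^h>0$ and $\dot M_0^h>0$ such that for all $k\ge1$ and all $i,j\in\{1,\dots,N\}$, \[ |\delta_{i,0}^k-\delta_{j,0}^k|\le M_0^h\, r_h^k,\qquad |\dot\delta_{i,0}^k|\le \dot M_0^h\, r_h^k . \] In particular $\delta_{i,0}^k-\delta_{j,0}^k\to0$ and $\dot\delta_{i,0}^k\to0$ as $k\to\infty$.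
   Context: Unconstrained distributed MPC scheme with prediction horizon $K=1$ (virtual-time deviation coordination). For $k=1,2,\dots$ and each agent $i$, define recursively \[ \delta^k_{i,0}=\delta^{k-1}_{i,1}-\alpha_i^k,\qquad \dot\delta^k_{i,0}=\dot\delta^{k-1}_{i,1}, \] let $u^k_{i,0}$ be the unique minimizer over $u\in\mathbb R$ of \[ \frac{w_1}{|\mathcal N_i|}\sum_{j\in\mathcal N_i}\Big(\delta^k_{i,0}+h\dot\delta^k_{i,0}+\tfrac{h^2}{2}u-\delta^{k-1}_{j,1}\Big)^2+w_2\big(\dot\delta^k_{i,0}+hu\big)^2+w_3u^2, \] and set \[ \delta^k_{i,1}=\delta^k_{i,0}+h\dot\delta^k_{i,0}+\tfrac{h^2}{2}u^k_{i,0},\qquad \dot\delta^k_{i,1}=\dot\delta^k_{i,0}+h\,u^k_{i,0}. \] Equivalently, $u^k_{i,0}=-a^h\frac{1}{|\mathcal N_i|}\sum_{j\in\mathcal N_i}(\delta^{k-1}_{i,1}-\delta^{k-1}_{j,1})-b^h\dot\delta^{k-1}_{i,1}+a^h\alpha_i^k$, where \[ a^h=\frac{w_1h^2}{2\left(w_3+w_2h^2+w_1\frac{h^4}{4}\right)},\qquad b^h=\frac{w_2h+w_1\frac{h^3}{2}}{w_3+w_2h^2+w_1\frac{h^4}{4}}. \] Here $\delta$ denotes the deviation of an agent's virtual time from real time, $\dot\delta$ the deviation of its rate from $1$, and $\alpha_i^k$ a path-following correction term. *)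

theory Defs
  imports "HOL-Analysis.Analysis"
begin

text \<open>Agents are the elements of a finite type 'a; the communication graph is a
relation E (E i j: j is a neighbour of i).\<close>

definition nbrs :: "('a \<Rightarrow> 'a \<Rightarrow> bool) \<Rightarrow> 'a \<Rightarrow> 'a set" where
  "nbrs E i = {j. E i j}"

definition mpc_cost ::
  "real \<Rightarrow> real \<Rightarrow> real \<Rightarrow> real \<Rightarrow> 'a set \<Rightarrow> ('a \<Rightarrow> real) \<Rightarrow> real \<Rightarrow> real \<Rightarrow> real \<Rightarrow> real" where
  "mpc_cost w1 w2 w3 h Nb prev d0 dd0 u =
     w1 / real (card Nb) * (\<Sum>j\<in>Nb. (d0 + h * dd0 + h^2 / 2 * u - prev j)^2)
     + w2 * (dd0 + h * u)^2 + w3 * u^2"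

definition mpc_input ::
  "real \<Rightarrow> real \<Rightarrow> real \<Rightarrow> real \<Rightarrow> 'a set \<Rightarrow> ('a \<Rightarrow> real) \<Rightarrow> real \<Rightarrow> real \<Rightarrow> real" where
  "mpc_input w1 w2 w3 h Nb prev d0 dd0 =
     (THE u. \<forall>v. mpc_cost w1 w2 w3 h Nb prev d0 dd0 u \<le> mpc_cost w1 w2 w3 h Nb prev d0 dd0 v)"

text \<open>mpc_state ... k i = (delta^k_{i,1}, deltadot^k_{i,1}); k = 0 gives the initial values.\<close>
primrec mpc_state ::
  "real \<Rightarrow> real \<Rightarrow> real \<Rightarrow> real \<Rightarrow> ('a \<Rightarrow> 'a \<Rightarrow> bool) \<Rightarrow> (nat \<Rightarrow> 'a \<Rightarrow> real)
   \<Rightarrow> ('a \<Rightarrow> real) \<Rightarrow> ('a \<Rightarrow> real) \<Rightarrow> nat \<Rightarrow> 'a \<Rightarrow> real \<times> real" where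
  "mpc_state w1 w2 w3 h E alpha x0 v0 0 = (\<lambda>i. (x0 i, v0 i))"
| "mpc_state w1 w2 w3 h E alpha x0 v0 (Suc k) =
     (let S = mpc_state w1 w2 w3 h E alpha x0 v0 k in
      (\<lambda>i. let d0 = fst (S i) - alpha (Suc k) i;
               dd0 = snd (S i);
               u = mpc_input w1 w2 w3 h (nbrs E i) (\<lambda>j. fst (S j)) d0 dd0
           in (d0 + h * dd0 + h^2 / 2 * u, dd0 + h * u)))"

text \<open>delta^k_{i,0} and deltadot^k_{i,0} (meaningful for k \<ge> 1).\<close>
definition mpc_delta0 ::
  "real \<Rightarrow> real \<Rightarrow> real \<Rightarrow> real \<Rightarrow> ('a \<Rightarrow> 'a \<Rightarrow> bool) \<Rightarrow> (nat \<Rightarrow> 'a \<Rightarrow> real)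
   \<Rightarrow> ('a \<Rightarrow> real) \<Rightarrow> ('a \<Rightarrow> real) \<Rightarrow> nat \<Rightarrow> 'a \<Rightarrow> real" where
  "mpc_delta0 w1 w2 w3 h E alpha x0 v0 k i =
     fst (mpc_state w1 w2 w3 h E alpha x0 v0 (k - 1) i) - alpha k i"

definition mpc_ddelta0 ::
  "real \<Rightarrow> real \<Rightarrow> real \<Rightarrow> real \<Rightarrow> ('a \<Rightarrow> 'a \<Rightarrow> bool) \<Rightarrow> (nat \<Rightarrow> 'a \<Rightarrow> real)
   \<Rightarrow> ('a \<Rightarrow> real) \<Rightarrow> ('a \<Rightarrow> real) \<Rightarrow> nat \<Rightarrow> 'a \<Rightarrow> real" where
  "mpc_ddelta0 w1 w2 w3 h E alpha x0 v0 k i =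
     snd (mpc_state w1 w2 w3 h E alpha x0 v0 (k - 1) i)"

end

theory Submission
  imports Defs
begin

text \<open>With \<open>u\<close> the rate deviation divided by \<open>h\<close> and \<open>\<epsilon> = h\<^sup>2\<close>, one MPC step is an explicit
  discretisation of the damped second-order consensus dynamics \<open>x' = u\<close>,
  \<open>u' = -(a\<^sup>h/h\<^sup>2) L x - (b\<^sup>h/h) u\<close>, driven by the path-following corrections \<open>\<alpha>\<close>, where \<open>L\<close>
  is the random-walk Laplacian of the graph. A tilted energy of this system contracts by a
  factor \<open>1 - \<kappa>\<epsilon>\<close> per step, uniformly for small \<open>h\<close>: the spectral gap of the connected graph
  turns the first-order dissipation into a decrease of the whole energy, and the
  \<open>O(\<epsilon>\<^sup>2)\<close> terms are absorbed once \<open>\<epsilon>\<close> is small. The square root of the energy is a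
  seminorm, so the exponentially small corrections only add a geometric forcing term, and
  both the disagreements and the rate deviations decay geometrically.\<close>

lemma quadratic_nonneg_imp_discriminant_le:
  fixes a b c :: real
  assumes nonneg: "\<And>t. 0 \<le> a + 2 * t * b + t^2 * c" and "c \<ge> 0"
  shows "b^2 \<le> a * c"
proof (cases "c = 0")
  case True
  show ?thesis
  proof (rule ccontr)
    assume "\<not> ?thesis"
    then have "b \<noteq> 0"
      using True by simp
    then have "a + 2 * (- (a + 1) / (2 * b)) * b + (- (a + 1) / (2 * b))^2 * c = -1"
      using True by (simp add: field_simps)
    then show False
      using nonneg[of "- (a + 1) / (2 * b)"] by simp
  qed
next
  case False
  then have "c > 0"
    using \<open>c \<ge> 0\<close> by simp
  have "0 \<le> a + 2 * (- b / c) * b + (- b / c)^2 * c"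
    by (rule nonneg)
  also have "\<dots> = a - b^2 / c"
    using \<open>c > 0\<close> by (simp add: power2_eq_square field_simps)
  finally show ?thesis
    using \<open>c > 0\<close> by (simp add: pos_divide_le_eq)
qed

text \<open>The triangle inequality for the square root of a nonnegative quadratic form \<open>q\<close>, with
  \<open>a = q x\<close>, \<open>c = q y\<close> and \<open>b\<close> their polar form.\<close>

lemma sqrt_quadratic_le:
  fixes a b c :: real
  assumes "\<And>t. 0 \<le> a + 2 * t * b + t^2 * c" and "c \<ge> 0"
  shows "sqrt (a + 2 * b + c) \<le> sqrt a + sqrt c"
proof -
  have "a \<ge> 0"
    using assms(1)[of 0] by simp
  have "b \<le> sqrt a * sqrt c"
    using quadratic_nonneg_imp_discriminant_le[OF assms] \<open>a \<ge> 0\<close> \<open>c \<ge> 0\<close>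
    by (metis real_le_rsqrt real_sqrt_mult)
  then have "a + 2 * b + c \<le> (sqrt a + sqrt c)^2"
    using \<open>a \<ge> 0\<close> \<open>c \<ge> 0\<close> by (simp add: power2_sum)
  then show ?thesis
    using \<open>a \<ge> 0\<close> \<open>c \<ge> 0\<close> by (simp add: real_le_lsqrt)
qed

lemma geometric_decay_of_recursion:
  fixes W :: "nat \<Rightarrow> real"
  assumes "\<And>k. W k \<ge> 0" and rec: "\<And>k. W (Suc k) \<le> \<sigma> * W k + C * \<rho>^(Suc k)"
    and "0 \<le> \<sigma>" "\<sigma> < 1" "0 < \<rho>" "\<rho> < 1" "C \<ge> 0"
  obtains r M where "\<rho> \<le> r" "r < 1" "M > 0" "\<And>k. W k \<le> M * r^k"
proof -
  define r where "r = (1 + max \<sigma> \<rho>) / 2"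
  have r: "\<rho> \<le> r" "\<sigma> < r" "r < 1"
    using assms by (auto simp: r_def)
  define M where "M = W 0 + C * r / (r - \<sigma>) + 1"
  have "C * r / (r - \<sigma>) \<ge> 0"
    using assms r by simp
  then have "M > 0"
    using assms by (simp add: M_def add_nonneg_pos)
  have "C * r / (r - \<sigma>) \<le> M"
    using assms by (simp add: M_def)
  then have step: "\<sigma> * M + C * r \<le> M * r"
    using r by (simp add: divide_le_eq algebra_simps)
  have "W k \<le> M * r^k" for k
  proof (induction k)
    case 0
    show ?case
      using \<open>C * r / (r - \<sigma>) \<ge> 0\<close> by (simp add: M_def)
  next
    case (Suc k)
    have "W (Suc k) \<le> \<sigma> * (M * r^k) + C * r^(Suc k)"
      using rec[of k] Suc.IH assms r
      by (smt (verit) mult_left_mono power_mono)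
    also have "\<dots> = r^k * (\<sigma> * M + C * r)"
      by (simp add: algebra_simps)
    also have "\<dots> \<le> r^k * (M * r)"
      using step r assms by (intro mult_left_mono) auto
    finally show ?case
      by (simp add: algebra_simps)
  qed
  then show ?thesis
    using that r \<open>M > 0\<close> by blast
qed

lemma tendsto_zero_of_geometric_bound:
  fixes f :: "nat \<Rightarrow> real"
  assumes "\<forall>k\<ge>1. \<bar>f k\<bar> \<le> M * r^k" "0 \<le> r" "r < 1"
  shows "f \<longlonglongrightarrow> 0"
proof (rule Lim_null_comparison)
  show "\<forall>\<^sub>F k in sequentially. norm (f k) \<le> M * r^k"
    using assms(1) unfolding eventually_sequentially by auto
  show "(\<lambda>k. M * r^k) \<longlonglongrightarrow> 0"
    using assms by (auto intro!: tendsto_mult_right_zero LIMSEQ_power_zero)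
qed

locale undirected_graph =
  fixes E :: "'a::finite \<Rightarrow> 'a \<Rightarrow> bool"
  assumes sym: "E i j \<Longrightarrow> E j i"
    and nbrs_nonempty: "nbrs E i \<noteq> {}"
begin

definition deg :: "'a \<Rightarrow> real" where
  "deg i = real (card (nbrs E i))"

text \<open>Averaging over neighbours makes the closed loop act through the random-walk Laplacian
  \<open>I - D\<^sup>-\<^sup>1 A\<close>, which is self-adjoint for the degree-weighted inner product.\<close>

definition lap :: "('a \<Rightarrow> real) \<Rightarrow> 'a \<Rightarrow> real" where
  "lap f i = f i - (\<Sum>j\<in>nbrs E i. f j) / deg i"

definition deg_inner :: "('a \<Rightarrow> real) \<Rightarrow> ('a \<Rightarrow> real) \<Rightarrow> real" where
  "deg_inner f g = (\<Sum>i\<in>UNIV. deg i * f i * g i)"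

definition dirichlet :: "('a \<Rightarrow> real) \<Rightarrow> real" where
  "dirichlet f = deg_inner f (lap f)"

lemma deg_pos: "deg i > 0"
  using nbrs_nonempty[of i] by (simp add: deg_def card_gt_0_iff)

lemma deg_ge_1: "deg i \<ge> 1"
  using nbrs_nonempty[of i] by (simp add: deg_def Suc_le_eq card_gt_0_iff)

lemma sum_nbrs_swap:
  "(\<Sum>i\<in>UNIV. \<Sum>j\<in>nbrs E i. F i j) = (\<Sum>i\<in>UNIV. \<Sum>j\<in>nbrs E i. F j i)"
proof -
  have nbrs_sum: "(\<Sum>j\<in>nbrs E i. H j) = (\<Sum>j\<in>UNIV. if E i j then H j else 0)" for i H
    unfolding nbrs_def by (simp add: sum.If_cases)
  have "(\<Sum>i\<in>UNIV. \<Sum>j\<in>nbrs E i. F i j) = (\<Sum>j\<in>UNIV. \<Sum>i\<in>UNIV. if E i j then F i j else 0)"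
    unfolding nbrs_sum by (rule sum.swap)
  also have "\<dots> = (\<Sum>j\<in>UNIV. \<Sum>i\<in>UNIV. if E j i then F i j else 0)"
    by (intro sum.cong refl) (metis sym)
  finally show ?thesis
    unfolding nbrs_sum .
qed

lemma deg_inner_commute: "deg_inner f g = deg_inner g f"
  unfolding deg_inner_def by (intro sum.cong refl) simp

lemma deg_inner_self_eq_sum_nbrs: "deg_inner f f = (\<Sum>i\<in>UNIV. \<Sum>j\<in>nbrs E i. f i ^ 2)"
  by (simp add: deg_inner_def deg_def power2_eq_square mult.assoc)

lemma deg_inner_self_nonneg: "deg_inner f f \<ge> 0"
  unfolding deg_inner_self_eq_sum_nbrs by (intro sum_nonneg) auto

lemma deg_inner_lap:
  "deg_inner f (lap g) = deg_inner f g - (\<Sum>i\<in>UNIV. \<Sum>j\<in>nbrs E i. f i * g j)"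
proof -
  have "deg_inner f (lap g) = (\<Sum>i\<in>UNIV. deg i * f i * g i - f i * (\<Sum>j\<in>nbrs E i. g j))"
    unfolding deg_inner_def lap_def using deg_pos
    by (intro sum.cong refl) (simp add: field_simps less_imp_neq[symmetric])
  then show ?thesis
    by (simp add: deg_inner_def sum_subtractf sum_distrib_left)
qed

lemma deg_inner_lap_commute: "deg_inner f (lap g) = deg_inner (lap f) g"
  using sum_nbrs_swap[of "\<lambda>i j. f i * g j"]
  by (simp add: deg_inner_lap deg_inner_commute[of "lap f"] deg_inner_commute[of f g] mult.commute)

lemma dirichlet_eq_edge_sum: "dirichlet f = (\<Sum>i\<in>UNIV. \<Sum>j\<in>nbrs E i. (f i - f j)^2) / 2"
proof -
  have "(\<Sum>i\<in>UNIV. \<Sum>j\<in>nbrs E i. (f i - f j)^2)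
      = (\<Sum>i\<in>UNIV. \<Sum>j\<in>nbrs E i. f i ^ 2) - 2 * (\<Sum>i\<in>UNIV. \<Sum>j\<in>nbrs E i. f i * f j)
        + (\<Sum>i\<in>UNIV. \<Sum>j\<in>nbrs E i. f j ^ 2)"
    by (simp add: power2_diff sum.distrib sum_subtractf sum_distrib_left mult.assoc)
  also have "(\<Sum>i\<in>UNIV. \<Sum>j\<in>nbrs E i. f j ^ 2) = (\<Sum>i\<in>UNIV. \<Sum>j\<in>nbrs E i. f i ^ 2)"
    by (rule sum_nbrs_swap)
  finally show ?thesis
    by (simp add: dirichlet_def deg_inner_lap deg_inner_self_eq_sum_nbrs)
qed

lemma dirichlet_nonneg: "dirichlet f \<ge> 0"
  unfolding dirichlet_eq_edge_sum by (intro divide_nonneg_pos sum_nonneg) auto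

lemma dirichlet_le: "dirichlet f \<le> 2 * deg_inner f f"
proof -
  have "(f i - f j)^2 \<le> 2 * f i ^ 2 + 2 * f j ^ 2" for i j
    using zero_le_power2[of "f i + f j"] by (simp add: power2_sum power2_diff)
  then have "(\<Sum>i\<in>UNIV. \<Sum>j\<in>nbrs E i. (f i - f j)^2)
      \<le> (\<Sum>i\<in>UNIV. \<Sum>j\<in>nbrs E i. 2 * f i ^ 2 + 2 * f j ^ 2)"
    by (intro sum_mono)
  also have "\<dots> = 2 * (\<Sum>i\<in>UNIV. \<Sum>j\<in>nbrs E i. f i ^ 2) + 2 * (\<Sum>i\<in>UNIV. \<Sum>j\<in>nbrs E i. f j ^ 2)"
    by (simp only: sum.distrib sum_distrib_left)
  also have "(\<Sum>i\<in>UNIV. \<Sum>j\<in>nbrs E i. f j ^ 2) = (\<Sum>i\<in>UNIV. \<Sum>j\<in>nbrs E i. f i ^ 2)"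
    by (rule sum_nbrs_swap)
  finally show ?thesis
    unfolding dirichlet_eq_edge_sum deg_inner_self_eq_sum_nbrs by linarith
qed

lemma edge_diff_le: "E i j \<Longrightarrow> \<bar>f i - f j\<bar> \<le> sqrt (2 * dirichlet f)"
proof -
  assume "E i j"
  then have "(f i - f j)^2 \<le> (\<Sum>j\<in>nbrs E i. (f i - f j)^2)"
    by (intro member_le_sum) (auto simp: nbrs_def)
  also have "\<dots> \<le> (\<Sum>i\<in>UNIV. \<Sum>j\<in>nbrs E i. (f i - f j)^2)"
    by (intro member_le_sum sum_nonneg) auto
  finally show ?thesis
    unfolding dirichlet_eq_edge_sum by (simp add: real_le_rsqrt)
qed

lemma deg_inner_add_left: "deg_inner (\<lambda>i. f i + g i) h = deg_inner f h + deg_inner g h"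
  unfolding deg_inner_def by (simp add: algebra_simps sum.distrib)
lemma deg_inner_diff_left: "deg_inner (\<lambda>i. f i - g i) h = deg_inner f h - deg_inner g h"
  unfolding deg_inner_def by (simp add: algebra_simps sum_subtractf)
lemma deg_inner_scale_left: "deg_inner (\<lambda>i. c * f i) h = c * deg_inner f h"
  unfolding deg_inner_def by (simp add: algebra_simps sum_distrib_left)
lemma deg_inner_minus_left: "deg_inner (\<lambda>i. - f i) h = - deg_inner f h"
  unfolding deg_inner_def by (simp add: sum_negf)
lemma deg_inner_add_right: "deg_inner h (\<lambda>i. f i + g i) = deg_inner h f + deg_inner h g"
  unfolding deg_inner_def by (simp add: algebra_simps sum.distrib)
lemma deg_inner_diff_right: "deg_inner h (\<lambda>i. f i - g i) = deg_inner h f - deg_inner h g"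
  unfolding deg_inner_def by (simp add: algebra_simps sum_subtractf)
lemma deg_inner_scale_right: "deg_inner h (\<lambda>i. c * f i) = c * deg_inner h f"
  unfolding deg_inner_def by (simp add: algebra_simps sum_distrib_left)
lemma deg_inner_minus_right: "deg_inner h (\<lambda>i. - f i) = - deg_inner h f"
  unfolding deg_inner_def by (simp add: sum_negf)

lemmas deg_inner_linear = deg_inner_add_left deg_inner_diff_left deg_inner_scale_left
  deg_inner_minus_left deg_inner_add_right deg_inner_diff_right deg_inner_scale_right
  deg_inner_minus_right

lemma lap_add: "lap (\<lambda>i. f i + g i) = (\<lambda>i. lap f i + lap g i)"
  unfolding lap_def by (auto simp: sum.distrib add_divide_distrib)
lemma lap_diff: "lap (\<lambda>i. f i - g i) = (\<lambda>i. lap f i - lap g i)"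
  unfolding lap_def by (auto simp: sum_subtractf diff_divide_distrib)
lemma lap_scale: "lap (\<lambda>i. c * f i) = (\<lambda>i. c * lap f i)"
  unfolding lap_def by (auto simp: sum_distrib_left[symmetric] algebra_simps)
lemma lap_minus: "lap (\<lambda>i. - f i) = (\<lambda>i. - lap f i)"
  unfolding lap_def by (auto simp: sum_negf)
lemma lap_const: "lap (\<lambda>i. c) = (\<lambda>i. 0)"
  unfolding lap_def using nbrs_nonempty by (auto simp: deg_def)

lemmas lap_linear = lap_add lap_diff lap_scale lap_minus

lemma deg_inner_const_lap: "deg_inner (\<lambda>i. c) (lap f) = 0"
  using deg_inner_lap_commute[of "\<lambda>i. c" f] by (simp add: lap_const deg_inner_def)

lemma deg_inner_abs_le_weighted:
  assumes "\<eta> > 0"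
  shows "2 * \<bar>deg_inner f g\<bar> \<le> \<eta> * deg_inner f f + deg_inner g g / \<eta>"
proof -
  have "2 * \<bar>f i * g i\<bar> \<le> \<eta> * (f i * f i) + g i * g i / \<eta>" for i
  proof -
    have "0 \<le> (\<eta> * \<bar>f i\<bar> - \<bar>g i\<bar>)^2 / \<eta>"
      using assms by simp
    also have "\<dots> = \<eta> * (f i * f i) + g i * g i / \<eta> - 2 * \<bar>f i * g i\<bar>"
      using assms by (simp add: field_simps power2_eq_square abs_mult)
    finally show ?thesis by simp
  qed
  then have "deg i * (2 * \<bar>f i * g i\<bar>) \<le> deg i * (\<eta> * (f i * f i) + g i * g i / \<eta>)" for i
    using deg_pos[of i] by (intro mult_left_mono) auto
  then have "(\<Sum>i\<in>UNIV. 2 * \<bar>deg i * f i * g i\<bar>)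
      \<le> (\<Sum>i\<in>UNIV. \<eta> * (deg i * f i * f i) + deg i * g i * g i / \<eta>)"
    using deg_pos by (intro sum_mono) (simp add: abs_mult abs_of_pos[OF deg_pos] algebra_simps)
  moreover have "2 * \<bar>deg_inner f g\<bar> \<le> (\<Sum>i\<in>UNIV. 2 * \<bar>deg i * f i * g i\<bar>)"
    unfolding deg_inner_def sum_distrib_left[symmetric] by simp
  ultimately show ?thesis
    by (simp add: deg_inner_def sum.distrib sum_distrib_left sum_divide_distrib)
qed

lemma deg_inner_abs_le: "2 * \<bar>deg_inner f g\<bar> \<le> deg_inner f f + deg_inner g g"
  using deg_inner_abs_le_weighted[of 1 f g] by simp

lemma deg_inner_scale_self: "deg_inner (\<lambda>i. c * f i) (\<lambda>i. c * f i) = c^2 * deg_inner f f"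
  by (simp add: deg_inner_linear power2_eq_square)

lemma deg_inner_add_self_le:
  "deg_inner (\<lambda>i. f i + g i) (\<lambda>i. f i + g i) \<le> 2 * deg_inner f f + 2 * deg_inner g g"
  using deg_inner_abs_le[of f g] by (simp add: deg_inner_linear deg_inner_commute[of g f])

lemma deg_inner_diff_self_le:
  "deg_inner (\<lambda>i. f i - g i) (\<lambda>i. f i - g i) \<le> 2 * deg_inner f f + 2 * deg_inner g g"
  using deg_inner_abs_le[of f g] by (simp add: deg_inner_linear deg_inner_commute[of g f])

lemma sq_le_deg_inner: "(f i)^2 \<le> deg_inner f f"
proof -
  have "(f i)^2 \<le> deg i * f i * f i"
    using mult_right_mono[OF deg_ge_1, of "f i * f i" i] by (simp add: power2_eq_square mult.assoc)
  also have "\<dots> \<le> deg_inner f f"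
    unfolding deg_inner_def using deg_pos
    by (intro member_le_sum) (auto simp: less_imp_le mult.assoc)
  finally show ?thesis .
qed

lemma deg_inner_lap_self_le: "deg_inner (lap f) (lap f) \<le> 2 * dirichlet f"
proof -
  have "deg i * lap f i * lap f i \<le> (\<Sum>j\<in>nbrs E i. (f i - f j)^2)" for i
  proof -
    have lap_eq: "lap f i = (\<Sum>j\<in>nbrs E i. f i - f j) / deg i"
      unfolding lap_def using deg_pos[of i] nbrs_nonempty[of i] unfolding deg_def
      by (simp add: sum_subtractf diff_divide_distrib)
    have "(\<Sum>j\<in>nbrs E i. f i - f j)^2 \<le> (\<Sum>j\<in>nbrs E i. (f i - f j)^2) * deg i"
      unfolding deg_def by (rule sum_squared_le_sum_of_squares)
    then show ?thesis
      using deg_pos[of i] unfolding lap_eq by (simp add: power2_eq_square field_simps)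
  qed
  then have "deg_inner (lap f) (lap f) \<le> (\<Sum>i\<in>UNIV. \<Sum>j\<in>nbrs E i. (f i - f j)^2)"
    unfolding deg_inner_def by (intro sum_mono)
  then show ?thesis
    by (simp add: dirichlet_eq_edge_sum)
qed

text \<open>The energy \<open>a \<cdot> dirichlet x + |u|\<^sup>2\<close> of the damped second-order consensus dynamics,
  tilted by the cross term \<open>2c\<langle>lap x, u\<rangle>\<close> so that it decays in the position
  coordinate as well and not only through the damping of \<open>u\<close>.\<close>

definition lyap :: "real \<Rightarrow> real \<Rightarrow> ('a \<Rightarrow> real) \<Rightarrow> ('a \<Rightarrow> real) \<Rightarrow> real" where
  "lyap a c x u = a * dirichlet x + deg_inner u u + 2 * c * deg_inner (lap x) u"

definition lyap_bilinear ::
  "real \<Rightarrow> real \<Rightarrow> ('a \<Rightarrow> real) \<Rightarrow> ('a \<Rightarrow> real) \<Rightarrow> ('a \<Rightarrow> real) \<Rightarrow> ('a \<Rightarrow> real) \<Rightarrow> real" where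
  "lyap_bilinear a c x1 u1 x2 u2 =
     a * deg_inner x1 (lap x2) + deg_inner u1 u2 + c * (deg_inner (lap x1) u2 + deg_inner (lap x2) u1)"

lemma lyap_add_scaled:
  "lyap a c (\<lambda>i. x1 i + t * x2 i) (\<lambda>i. u1 i + t * u2 i)
     = lyap a c x1 u1 + 2 * t * lyap_bilinear a c x1 u1 x2 u2 + t^2 * lyap a c x2 u2"
proof -
  have "deg_inner x2 (lap x1) = deg_inner x1 (lap x2)"
    using deg_inner_lap_commute[of x2 x1] deg_inner_commute[of "lap x2" x1] by simp
  then show ?thesis
    unfolding lyap_def lyap_bilinear_def dirichlet_def
    by (simp add: lap_linear deg_inner_linear deg_inner_commute[of u2 u1] algebra_simps
        power2_eq_square)
qed

lemma lyap_cross_term_le: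
  assumes "c \<ge> 0"
  shows "\<bar>2 * c * deg_inner (lap x) u\<bar> \<le> 2 * c * dirichlet x + c * deg_inner u u"
proof -
  have "2 * \<bar>deg_inner (lap x) u\<bar> \<le> 2 * dirichlet x + deg_inner u u"
    using deg_inner_abs_le[of "lap x" u] deg_inner_lap_self_le[of x] by simp
  then have "c * (2 * \<bar>deg_inner (lap x) u\<bar>) \<le> c * (2 * dirichlet x + deg_inner u u)"
    using assms by (rule mult_left_mono)
  then show ?thesis
    using assms by (simp add: abs_mult algebra_simps)
qed

lemma lyap_lower:
  "c \<ge> 0 \<Longrightarrow> (a - 2 * c) * dirichlet x + (1 - c) * deg_inner u u \<le> lyap a c x u"
  using lyap_cross_term_le[of c x u] by (simp add: lyap_def abs_le_iff algebra_simps)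

lemma lyap_upper:
  "c \<ge> 0 \<Longrightarrow> lyap a c x u \<le> (a + 2 * c) * dirichlet x + (1 + c) * deg_inner u u"
  using lyap_cross_term_le[of c x u] by (simp add: lyap_def abs_le_iff algebra_simps)

lemma lyap_nonneg:
  assumes "0 \<le> c" "c \<le> 1" "2 * c \<le> a"
  shows "lyap a c x u \<ge> 0"
proof -
  have "0 \<le> (a - 2 * c) * dirichlet x + (1 - c) * deg_inner u u"
    using assms dirichlet_nonneg[of x] deg_inner_self_nonneg[of u] by simp
  also have "\<dots> \<le> lyap a c x u"
    using lyap_lower assms by simp
  finally show ?thesis .
qed

lemma lyap_le_energy:
  assumes "0 \<le> a" "0 \<le> c" "c \<le> 1/2"
  shows "lyap a c x u \<le> (a + 2) * (dirichlet x + deg_inner u u)"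
proof -
  have "(a + 2 * c) * dirichlet x \<le> (a + 2) * dirichlet x"
    using assms dirichlet_nonneg[of x] by (intro mult_right_mono) auto
  moreover have "(1 + c) * deg_inner u u \<le> (a + 2) * deg_inner u u"
    using assms deg_inner_self_nonneg[of u] by (intro mult_right_mono) auto
  ultimately show ?thesis
    using lyap_upper[OF \<open>0 \<le> c\<close>, of a x u] by (simp add: algebra_simps)
qed

lemma energy_le_lyap:
  assumes "0 \<le> c" "c \<le> 1/2" "4 * c \<le> a"
  shows "min (a / 2) (1 / 2) * (dirichlet x + deg_inner u u) \<le> lyap a c x u"
proof -
  have "min (a / 2) (1 / 2) * dirichlet x \<le> (a - 2 * c) * dirichlet x"
    using assms dirichlet_nonneg[of x] by (intro mult_right_mono) auto
  moreover have "min (a / 2) (1 / 2) * deg_inner u u \<le> (1 - c) * deg_inner u u"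
    using assms deg_inner_self_nonneg[of u] by (intro mult_right_mono) auto
  ultimately show ?thesis
    using lyap_lower[OF \<open>0 \<le> c\<close>, of a x u] by (simp add: algebra_simps)
qed

lemma sqrt_lyap_add_le:
  assumes "0 \<le> c" "c \<le> 1" "2 * c \<le> a"
  shows "sqrt (lyap a c (\<lambda>i. x1 i + x2 i) (\<lambda>i. u1 i + u2 i))
           \<le> sqrt (lyap a c x1 u1) + sqrt (lyap a c x2 u2)"
proof -
  have "sqrt (lyap a c x1 u1 + 2 * lyap_bilinear a c x1 u1 x2 u2 + lyap a c x2 u2)
          \<le> sqrt (lyap a c x1 u1) + sqrt (lyap a c x2 u2)"
  proof (rule sqrt_quadratic_le)
    show "0 \<le> lyap a c x1 u1 + 2 * t * lyap_bilinear a c x1 u1 x2 u2 + t^2 * lyap a c x2 u2" for t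
      using lyap_nonneg[OF assms] lyap_add_scaled[of a c x1 t x2 u1 u2] by metis
  qed (rule lyap_nonneg[OF assms])
  then show ?thesis
    using lyap_add_scaled[of a c x1 1 x2 u1 u2] by simp
qed

text \<open>The velocity variable \<open>u\<close> is the rate deviation
  divided by \<open>h\<close> and \<open>\<epsilon> = h\<^sup>2\<close>, so that both coordinates move by \<open>O(\<epsilon>)\<close>.\<close>

definition feedback :: "real \<Rightarrow> real \<Rightarrow> ('a \<Rightarrow> real) \<Rightarrow> ('a \<Rightarrow> real) \<Rightarrow> 'a \<Rightarrow> real" where
  "feedback a b x u i = a * lap x i + b * u i"

definition step_pos :: "real \<Rightarrow> real \<Rightarrow> real \<Rightarrow> ('a \<Rightarrow> real) \<Rightarrow> ('a \<Rightarrow> real) \<Rightarrow> 'a \<Rightarrow> real" where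
  "step_pos \<epsilon> a b x u i = x i + \<epsilon> * u i - \<epsilon>^2 / 2 * feedback a b x u i"

definition step_vel :: "real \<Rightarrow> real \<Rightarrow> real \<Rightarrow> ('a \<Rightarrow> real) \<Rightarrow> ('a \<Rightarrow> real) \<Rightarrow> 'a \<Rightarrow> real" where
  "step_vel \<epsilon> a b x u i = u i - \<epsilon> * feedback a b x u i"

lemma lyap_step_expand:
  fixes a b c \<epsilon> :: real and x u :: "'a \<Rightarrow> real"
  defines "g \<equiv> feedback a b x u"
  shows "lyap a c (step_pos \<epsilon> a b x u) (step_vel \<epsilon> a b x u)
    = lyap a c x u
      + \<epsilon> * (- 2 * b * deg_inner u u - 2 * c * a * deg_inner (lap x) (lap x)
              - 2 * c * b * deg_inner (lap x) u + 2 * c * dirichlet u)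
      + \<epsilon>^2 * (- a * deg_inner (lap x) g - c * deg_inner (lap g) u
               + lyap a c (\<lambda>i. u i - \<epsilon> / 2 * g i) (\<lambda>i. - g i))"
proof -
  define dx where "dx = (\<lambda>i. u i - \<epsilon> / 2 * g i)"
  define du where "du = (\<lambda>i. - g i)"
  have g: "g = (\<lambda>i. a * lap x i + b * u i)"
    unfolding g_def feedback_def ..
  have pos: "step_pos \<epsilon> a b x u = (\<lambda>i. x i + \<epsilon> * dx i)"
    unfolding step_pos_def dx_def g_def[symmetric] by (auto simp: algebra_simps power2_eq_square)
  have vel: "step_vel \<epsilon> a b x u = (\<lambda>i. u i + \<epsilon> * du i)"
    unfolding step_vel_def du_def g_def[symmetric] by auto
  have lap_dx: "lap dx = (\<lambda>i. lap u i - \<epsilon> / 2 * lap g i)"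
    unfolding dx_def by (simp only: lap_diff lap_scale)
  have x_dx: "deg_inner x (lap dx) = deg_inner (lap x) u - \<epsilon> / 2 * deg_inner (lap x) g"
    unfolding lap_dx deg_inner_diff_right deg_inner_scale_right by (simp add: deg_inner_lap_commute)
  have u_du: "deg_inner u du = - (a * deg_inner (lap x) u + b * deg_inner u u)"
    unfolding du_def g by (simp add: deg_inner_linear deg_inner_commute[of u "lap x"])
  have x_du: "deg_inner (lap x) du = - (a * deg_inner (lap x) (lap x) + b * deg_inner (lap x) u)"
    unfolding du_def g by (simp add: deg_inner_linear)
  have dx_u: "deg_inner (lap dx) u = dirichlet u - \<epsilon> / 2 * deg_inner (lap g) u"
    unfolding lap_dx dirichlet_def deg_inner_diff_left deg_inner_scale_left
    by (simp add: deg_inner_commute[of "lap u" u])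
  have "2 * \<epsilon> * lyap_bilinear a c x u dx du
      = \<epsilon> * (- 2 * b * deg_inner u u - 2 * c * a * deg_inner (lap x) (lap x)
              - 2 * c * b * deg_inner (lap x) u + 2 * c * dirichlet u)
        - \<epsilon>^2 * (a * deg_inner (lap x) g + c * deg_inner (lap g) u)"
    unfolding lyap_bilinear_def x_dx u_du x_du dx_u by (simp add: algebra_simps power2_eq_square)
  then show ?thesis
    unfolding pos vel lyap_add_scaled dx_def[symmetric] du_def[symmetric]
    by (simp add: algebra_simps)
qed

lemma lyap_rate_le:
  assumes "a > 0" "b > 0" "c \<ge> 0" and small_c: "4 * c + c * b^2 / a \<le> b"
    and "G > 0" and gap: "dirichlet x \<le> G * deg_inner (lap x) (lap x)"
  shows "- 2 * b * deg_inner u u - 2 * c * a * deg_inner (lap x) (lap x)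
           - 2 * c * b * deg_inner (lap x) u + 2 * c * dirichlet u
         \<le> - (c * a / G) * dirichlet x - b * deg_inner u u"
proof -
  define N where "N = deg_inner (lap x) (lap x)"
  define S where "S = deg_inner u u"
  define I where "I = deg_inner (lap x) u"
  have "2 * \<bar>I\<bar> \<le> (a / b) * N + S / (a / b)"
    unfolding I_def N_def S_def using assms by (intro deg_inner_abs_le_weighted) simp
  then have "(c * b) * (2 * \<bar>I\<bar>) \<le> (c * b) * ((a / b) * N + S / (a / b))"
    using assms by (intro mult_left_mono) auto
  also have "\<dots> = c * a * N + (c * b^2 / a) * S"
    using assms by (simp add: field_simps power2_eq_square)
  finally have cross: "- (2 * c * b * I) \<le> c * a * N + (c * b^2 / a) * S"
    using assms abs_ge_minus_self[of I] mult_left_mono[of "- I" "\<bar>I\<bar>" "2 * c * b"]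
    by (simp add: algebra_simps)
  have "c * dirichlet u \<le> c * (2 * S)"
    unfolding S_def using assms by (intro mult_left_mono dirichlet_le)
  moreover have "(4 * c + c * b^2 / a) * S \<le> b * S"
    using small_c deg_inner_self_nonneg by (intro mult_right_mono) (auto simp: S_def)
  moreover have "(c * a / G) * dirichlet x \<le> (c * a / G) * (G * N)"
    unfolding N_def using assms gap by (intro mult_left_mono) auto
  ultimately show ?thesis
    using cross \<open>G > 0\<close> unfolding N_def[symmetric] S_def[symmetric] I_def[symmetric]
    by (simp add: algebra_simps)
qed

lemma feedback_norm_le:
  "deg_inner (feedback a b x u) (feedback a b x u)
     \<le> (4 * a^2 + 2 * b^2) * (dirichlet x + deg_inner u u)"
proof -
  have "deg_inner (feedback a b x u) (feedback a b x u)
      \<le> 2 * (a^2 * deg_inner (lap x) (lap x)) + 2 * (b^2 * deg_inner u u)"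
    using deg_inner_add_self_le[of "\<lambda>i. a * lap x i" "\<lambda>i. b * u i"]
    unfolding feedback_def by (simp only: deg_inner_scale_self)
  also have "\<dots> \<le> 2 * (a^2 * (2 * dirichlet x)) + 2 * (b^2 * deg_inner u u)"
    using deg_inner_lap_self_le[of x] by (intro add_mono mult_left_mono) auto
  also have "\<dots> \<le> (4 * a^2 + 2 * b^2) * (dirichlet x + deg_inner u u)"
    using dirichlet_nonneg[of x] deg_inner_self_nonneg[of u] by (simp add: algebra_simps)
  finally show ?thesis .
qed

lemma lyap_half_step_le:
  assumes "0 \<le> a" "0 \<le> c" "c \<le> 1/2" "0 \<le> \<epsilon>" "\<epsilon> \<le> 1"
  shows "lyap a c (\<lambda>i. u i - \<epsilon> / 2 * g i) (\<lambda>i. - g i) \<le> (a + 2) * (4 * deg_inner u u + 2 * deg_inner g g)"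
proof -
  define y where "y = (\<lambda>i. u i - \<epsilon> / 2 * g i)"
  have "(\<epsilon> / 2)^2 * deg_inner g g \<le> 1/4 * deg_inner g g"
    using assms deg_inner_self_nonneg[of g] by (intro mult_right_mono) (simp_all add: power_divide power_le_one)
  then have "deg_inner y y \<le> 2 * deg_inner u u + deg_inner g g / 2"
    using deg_inner_diff_self_le[of u "\<lambda>i. \<epsilon> / 2 * g i"] unfolding y_def deg_inner_scale_self by simp
  then have "dirichlet y + deg_inner (\<lambda>i. - g i) (\<lambda>i. - g i) \<le> 4 * deg_inner u u + 2 * deg_inner g g"
    using dirichlet_le[of y] by (simp add: deg_inner_linear)
  then have "(a + 2) * (dirichlet y + deg_inner (\<lambda>i. - g i) (\<lambda>i. - g i))
      \<le> (a + 2) * (4 * deg_inner u u + 2 * deg_inner g g)"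
    using assms by (intro mult_left_mono) auto
  then show ?thesis
    using lyap_le_energy[OF assms(1-3), of y "\<lambda>i. - g i"] unfolding y_def by linarith
qed

lemma lyap_remainder_le:
  fixes a b c \<epsilon> :: real and x u :: "'a \<Rightarrow> real"
  defines "g \<equiv> feedback a b x u"
  assumes "0 \<le> a" "0 \<le> c" "c \<le> 1/2" "0 \<le> \<epsilon>" "\<epsilon> \<le> 1"
  shows "- a * deg_inner (lap x) g - c * deg_inner (lap g) u
           + lyap a c (\<lambda>i. u i - \<epsilon> / 2 * g i) (\<lambda>i. - g i)
         \<le> (a + 2) * (12 * a^2 + 6 * b^2 + 5) * (dirichlet x + deg_inner u u)"
proof -
  define P where "P = dirichlet x"
  define S where "S = deg_inner u u"
  define N where "N = deg_inner g g"
  have "P \<ge> 0" "S \<ge> 0" "N \<ge> 0"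
    unfolding P_def S_def N_def by (simp_all add: dirichlet_nonneg deg_inner_self_nonneg)
  have N_le: "N \<le> (4 * a^2 + 2 * b^2) * (P + S)"
    unfolding N_def P_def S_def g_def by (rule feedback_norm_le)
  have first: "- a * deg_inner (lap x) g \<le> (a + 2) * (P + N / 2)"
  proof -
    have "2 * \<bar>deg_inner (lap x) g\<bar> \<le> 2 * P + N"
      using deg_inner_abs_le[of "lap x" g] deg_inner_lap_self_le[of x] unfolding P_def N_def by simp
    then have "a * (- deg_inner (lap x) g) \<le> a * (P + N / 2)"
      using \<open>a \<ge> 0\<close> by (intro mult_left_mono) auto
    also have "\<dots> \<le> (a + 2) * (P + N / 2)"
      using \<open>P \<ge> 0\<close> \<open>N \<ge> 0\<close> by (intro mult_right_mono) auto
    finally show ?thesis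
      by simp
  qed
  have second: "- c * deg_inner (lap g) u \<le> (a + 2) * (N / 2 + S / 8)"
  proof -
    have "2 * \<bar>deg_inner (lap g) u\<bar> \<le> 4 * N + S"
      using deg_inner_abs_le[of "lap g" u] deg_inner_lap_self_le[of g] dirichlet_le[of g]
      unfolding N_def S_def by simp
    then have "c * (- deg_inner (lap g) u) \<le> c * (2 * N + S / 2)"
      using assms by (intro mult_left_mono) auto
    also have "\<dots> \<le> 1/2 * (2 * N + S / 2)"
      using assms \<open>S \<ge> 0\<close> \<open>N \<ge> 0\<close> by (intro mult_right_mono) auto
    also have "\<dots> \<le> (a + 2) * (N / 2 + S / 8)"
      using assms \<open>S \<ge> 0\<close> \<open>N \<ge> 0\<close> mult_right_mono[of 2 "a + 2" "N / 2 + S / 8"] by simp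
    finally show ?thesis
      by simp
  qed
  have third: "lyap a c (\<lambda>i. u i - \<epsilon> / 2 * g i) (\<lambda>i. - g i) \<le> (a + 2) * (4 * S + 2 * N)"
    unfolding S_def N_def using assms by (intro lyap_half_step_le) auto
  have "P + N / 2 + (N / 2 + S / 8) + (4 * S + 2 * N) \<le> 5 * (P + S) + 3 * N"
    using \<open>P \<ge> 0\<close> \<open>S \<ge> 0\<close> \<open>N \<ge> 0\<close> by simp
  also have "\<dots> \<le> (12 * a^2 + 6 * b^2 + 5) * (P + S)"
    using N_le by (simp add: algebra_simps)
  finally have "(a + 2) * (P + N / 2 + (N / 2 + S / 8) + (4 * S + 2 * N))
      \<le> (a + 2) * ((12 * a^2 + 6 * b^2 + 5) * (P + S))"
    using assms by (intro mult_left_mono) auto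
  moreover have "- a * deg_inner (lap x) g - c * deg_inner (lap g) u
          + lyap a c (\<lambda>i. u i - \<epsilon> / 2 * g i) (\<lambda>i. - g i)
        \<le> (a + 2) * (P + N / 2 + (N / 2 + S / 8) + (4 * S + 2 * N))"
    using first second third by (simp add: distrib_left)
  ultimately show ?thesis
    unfolding P_def S_def by (simp add: mult.assoc)
qed

lemma lyap_step_contraction:
  assumes "a > 0" "b > 0" "0 < c" "c \<le> 1/2" and small_c: "4 * c + c * b^2 / a \<le> b"
    and "G > 0" and gap: "\<And>f. dirichlet f \<le> G * deg_inner (lap f) (lap f)"
    and "0 < \<epsilon>" "\<epsilon> \<le> 1" "0 \<le> \<kappa>" "\<kappa> \<le> c * a / G" "\<kappa> \<le> b"
    and small_\<epsilon>: "\<epsilon> * ((a + 2) * (12 * a^2 + 6 * b^2 + 5)) \<le> \<kappa> / 2"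
  shows "lyap a c (step_pos \<epsilon> a b x u) (step_vel \<epsilon> a b x u)
           \<le> (1 - \<epsilon> * \<kappa> / (2 * (a + 2))) * lyap a c x u"
proof -
  define R where "R = (a + 2) * (12 * a^2 + 6 * b^2 + 5)"
  define N where "N = dirichlet x + deg_inner u u"
  define V where "V = lyap a c x u"
  have "dirichlet x \<ge> 0" "deg_inner u u \<ge> 0"
    by (simp_all add: dirichlet_nonneg deg_inner_self_nonneg)
  have rate: "- 2 * b * deg_inner u u - 2 * c * a * deg_inner (lap x) (lap x)
                - 2 * c * b * deg_inner (lap x) u + 2 * c * dirichlet u \<le> - \<kappa> * N"
  proof -
    have "\<kappa> * dirichlet x \<le> (c * a / G) * dirichlet x"
      using \<open>dirichlet x \<ge> 0\<close> \<open>\<kappa> \<le> c * a / G\<close> by (rule mult_right_mono[rotated])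
    moreover have "\<kappa> * deg_inner u u \<le> b * deg_inner u u"
      using \<open>deg_inner u u \<ge> 0\<close> \<open>\<kappa> \<le> b\<close> by (rule mult_right_mono[rotated])
    ultimately show ?thesis
      using lyap_rate_le[OF \<open>a > 0\<close> \<open>b > 0\<close> less_imp_le[OF \<open>c > 0\<close>] small_c \<open>G > 0\<close> gap[of x], of u]
      unfolding N_def by (simp add: algebra_simps)
  qed
  have "\<epsilon>^2 * (- a * deg_inner (lap x) (feedback a b x u) - c * deg_inner (lap (feedback a b x u)) u
          + lyap a c (\<lambda>i. u i - \<epsilon> / 2 * feedback a b x u i) (\<lambda>i. - feedback a b x u i))
        \<le> \<epsilon> * ((\<epsilon> * R) * N)"
    using lyap_remainder_le[where a = a and b = b and c = c and \<epsilon> = \<epsilon> and x = x and u = u] assms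
    unfolding R_def N_def power2_eq_square by (simp add: mult_left_mono)
  also have "\<dots> \<le> \<epsilon> * (\<kappa> / 2 * N)"
    using small_\<epsilon> \<open>\<epsilon> > 0\<close> \<open>dirichlet x \<ge> 0\<close> \<open>deg_inner u u \<ge> 0\<close> unfolding R_def N_def
    by (intro mult_left_mono mult_right_mono) auto
  finally have "lyap a c (step_pos \<epsilon> a b x u) (step_vel \<epsilon> a b x u) \<le> V - \<epsilon> * \<kappa> / 2 * N"
    using mult_left_mono[OF rate, of \<epsilon>] \<open>\<epsilon> > 0\<close>
    unfolding lyap_step_expand V_def by (simp add: algebra_simps)
  moreover have "V \<le> (a + 2) * N"
    unfolding V_def N_def using assms by (intro lyap_le_energy) auto
  then have "\<epsilon> * \<kappa> / 2 * (V / (a + 2)) \<le> \<epsilon> * \<kappa> / 2 * N"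
    using assms by (intro mult_left_mono) (auto simp: divide_le_eq mult.commute)
  ultimately have "lyap a c (step_pos \<epsilon> a b x u) (step_vel \<epsilon> a b x u)
      \<le> V - \<epsilon> * \<kappa> / 2 * (V / (a + 2))"
    by linarith
  also have "\<dots> = (1 - \<epsilon> * \<kappa> / (2 * (a + 2))) * V"
    using \<open>a > 0\<close> by (simp add: field_simps)
  finally show ?thesis
    unfolding V_def .
qed

lemma lyap_scaled_le:
  assumes "0 \<le> a" "0 \<le> c" "c \<le> 1/2" and bound: "\<And>i. \<bar>f i\<bar> \<le> D"
  shows "lyap a c (\<lambda>i. p * f i) (\<lambda>i. q * f i) \<le> (a + 2) * (2 * p^2 + q^2) * (\<Sum>i\<in>UNIV. deg i) * D^2"
proof -
  have "deg_inner f f \<le> (\<Sum>i\<in>UNIV. deg i * D^2)"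
    unfolding deg_inner_def
  proof (intro sum_mono)
    fix i
    have "(f i)^2 \<le> D^2"
      using bound[of i] by (metis abs_ge_zero order_trans power2_abs power_mono)
    then show "deg i * f i * f i \<le> deg i * D^2"
      using deg_pos[of i] by (simp add: mult.assoc power2_eq_square)
  qed
  also have "\<dots> = (\<Sum>i\<in>UNIV. deg i) * D^2"
    by (simp add: sum_distrib_right)
  finally have f: "deg_inner f f \<le> (\<Sum>i\<in>UNIV. deg i) * D^2" .
  have "lyap a c (\<lambda>i. p * f i) (\<lambda>i. q * f i)
      \<le> (a + 2) * (dirichlet (\<lambda>i. p * f i) + q^2 * deg_inner f f)"
    using lyap_le_energy[OF assms(1-3), of "\<lambda>i. p * f i" "\<lambda>i. q * f i"]
    by (simp only: deg_inner_scale_self)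
  also have "\<dots> \<le> (a + 2) * (2 * (p^2 * deg_inner f f) + q^2 * deg_inner f f)"
    using assms dirichlet_le[of "\<lambda>i. p * f i"] by (simp add: deg_inner_scale_self)
  also have "\<dots> = (a + 2) * (2 * p^2 + q^2) * deg_inner f f"
    by (simp add: algebra_simps)
  also have "\<dots> \<le> (a + 2) * (2 * p^2 + q^2) * ((\<Sum>i\<in>UNIV. deg i) * D^2)"
    using f assms by (intro mult_left_mono) auto
  finally show ?thesis
    by (simp add: mult.assoc)
qed

lemma lyap_step_contraction_on_box:
  assumes "0 < A" "0 < B" and a: "A/2 \<le> a" "a \<le> A" and b: "B/2 \<le> b" "b \<le> B'"
    and c: "0 < c" "c \<le> 1/2" "c \<le> A/8" "c * (4 + 2 * B'^2 / A) \<le> B/2"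
    and "G > 0" and gap: "\<And>f. dirichlet f \<le> G * deg_inner (lap f) (lap f)"
    and "0 < \<epsilon>" "\<epsilon> \<le> 1" "0 \<le> \<kappa>" "\<kappa> \<le> c * A / (2 * G)" "\<kappa> \<le> B/2"
    and small_\<epsilon>: "\<epsilon> * ((A + 2) * (12 * A^2 + 6 * B'^2 + 5)) \<le> \<kappa> / 2"
  shows "lyap a c (step_pos \<epsilon> a b x u) (step_vel \<epsilon> a b x u)
           \<le> (1 - \<epsilon> * \<kappa> / (2 * (A + 2))) * lyap a c x u"
proof -
  have "0 < a" "0 < b"
    using a b assms by auto
  have "b^2 \<le> B'^2"
    using b \<open>0 < b\<close> by (intro power_mono) auto
  then have "A * b^2 \<le> (2 * a) * B'^2"
    using a \<open>0 < A\<close> by (intro mult_mono) auto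
  then have "c * (b^2 / a) \<le> c * (2 * B'^2 / A)"
    using \<open>0 < a\<close> \<open>0 < A\<close> c by (intro mult_left_mono) (simp_all add: field_simps)
  then have small_c: "4 * c + c * b^2 / a \<le> b"
    using c b by (simp add: distrib_left)
  have "(a + 2) * (12 * a^2 + 6 * b^2 + 5) \<le> (A + 2) * (12 * A^2 + 6 * B'^2 + 5)"
    using a b \<open>0 < a\<close> \<open>0 < b\<close> by (intro mult_mono add_mono power_mono) auto
  then have "\<epsilon> * ((a + 2) * (12 * a^2 + 6 * b^2 + 5)) \<le> \<kappa> / 2"
    using small_\<epsilon> \<open>0 < \<epsilon>\<close> mult_left_mono[of _ _ \<epsilon>] by (meson less_imp_le order_trans)
  moreover have "\<kappa> \<le> c * a / G"
  proof -
    have "c * A \<le> c * (2 * a)"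
      using a c by (intro mult_left_mono) auto
    then have "c * A / (2 * G) \<le> c * (2 * a) / (2 * G)"
      using \<open>G > 0\<close> by (intro divide_right_mono) auto
    then show ?thesis
      using \<open>\<kappa> \<le> c * A / (2 * G)\<close> by simp
  qed
  ultimately have "lyap a c (step_pos \<epsilon> a b x u) (step_vel \<epsilon> a b x u)
      \<le> (1 - \<epsilon> * \<kappa> / (2 * (a + 2))) * lyap a c x u"
    using \<open>0 < a\<close> \<open>0 < b\<close> c small_c \<open>G > 0\<close> gap assms
    by (intro lyap_step_contraction) auto
  also have "\<dots> \<le> (1 - \<epsilon> * \<kappa> / (2 * (A + 2))) * lyap a c x u"
  proof (rule mult_right_mono)
    show "lyap a c x u \<ge> 0"
      using c a by (intro lyap_nonneg) auto
    show "1 - \<epsilon> * \<kappa> / (2 * (a + 2)) \<le> 1 - \<epsilon> * \<kappa> / (2 * (A + 2))"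
      using a \<open>0 < a\<close> \<open>0 < \<epsilon>\<close> \<open>0 \<le> \<kappa>\<close> by (intro diff_left_mono divide_left_mono) auto
  qed
  finally show ?thesis .
qed

end

locale connected_graph = undirected_graph +
  assumes connected: "E\<^sup>*\<^sup>* i j"
begin

lemma relpowp_diff_le: "(E ^^ n) i j \<Longrightarrow> \<bar>f i - f j\<bar> \<le> real n * sqrt (2 * dirichlet f)"
proof (induction n arbitrary: j)
  case 0
  then show ?case by simp
next
  case (Suc n)
  then obtain b where "(E ^^ n) i b" and "E b j"
    by auto
  then have "\<bar>f i - f b\<bar> + \<bar>f b - f j\<bar> \<le> real n * sqrt (2 * dirichlet f) + sqrt (2 * dirichlet f)"
    using Suc.IH edge_diff_le by (intro add_mono)
  then show ?case
    by (simp add: algebra_simps)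
qed

lemma oscillation_le: "\<exists>K\<ge>0. \<forall>f i j. \<bar>f i - f j\<bar> \<le> K * sqrt (dirichlet f)"
proof -
  have "\<forall>p. \<exists>n. (E ^^ n) (fst p) (snd p)"
    using rtranclp_imp_relpowp[OF connected] by blast
  then obtain n where "\<forall>p. (E ^^ n p) (fst p) (snd p)"
    by metis
  then have n: "(E ^^ n (i, j)) i j" for i j
    by force
  define K where "K = real (Max (range n)) * sqrt 2"
  have "\<bar>f i - f j\<bar> \<le> K * sqrt (dirichlet f)" for f i j
  proof -
    have "\<bar>f i - f j\<bar> \<le> real (n (i, j)) * sqrt (2 * dirichlet f)"
      using relpowp_diff_le[OF n] .
    also have "\<dots> \<le> real (Max (range n)) * sqrt (2 * dirichlet f)"
      by (intro mult_right_mono) (auto simp: dirichlet_nonneg)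
    finally show ?thesis
      by (simp add: K_def real_sqrt_mult mult.assoc)
  qed
  moreover have "K \<ge> 0"
    by (simp add: K_def)
  ultimately show ?thesis
    by blast
qed

lemma spectral_gap: "\<exists>G>0. \<forall>f. dirichlet f \<le> G * deg_inner (lap f) (lap f)"
proof -
  obtain K where "K \<ge> 0" and K: "\<And>f i j. \<bar>f i - f j\<bar> \<le> K * sqrt (dirichlet f)"
    using oscillation_le by blast
  define T where "T = (K^2 + 1) * (\<Sum>i\<in>UNIV. deg i)"
  have T: "T > 0"
    unfolding T_def using deg_pos by (intro mult_pos_pos sum_pos) (auto simp: add_nonneg_pos)
  have "dirichlet f \<le> T * deg_inner (lap f) (lap f)" for f
  proof -
    fix i0
    define g where "g = (\<lambda>i. f i - f i0)"
    have "g i ^ 2 \<le> (K^2 + 1) * dirichlet f" for i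
    proof -
      have "g i ^ 2 \<le> (K * sqrt (dirichlet f))^2"
        unfolding g_def using K[of f i i0] by (metis abs_ge_zero power2_abs power_mono)
      also have "\<dots> \<le> (K^2 + 1) * dirichlet f"
        using dirichlet_nonneg[of f] by (simp add: power_mult_distrib distrib_right)
      finally show ?thesis .
    qed
    then have "deg_inner g g \<le> (\<Sum>i\<in>UNIV. deg i * ((K^2 + 1) * dirichlet f))"
      unfolding deg_inner_def using deg_pos
      by (intro sum_mono) (simp add: mult.assoc power2_eq_square)
    also have "\<dots> = T * dirichlet f"
      by (simp add: T_def sum_distrib_right[symmetric] mult_ac)
    finally have gg: "deg_inner g g \<le> T * dirichlet f" .
    have "dirichlet f = deg_inner g (lap f)"
      by (simp add: g_def dirichlet_def deg_inner_diff_left deg_inner_const_lap)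
    then have "2 * dirichlet f \<le> deg_inner g g / T + deg_inner (lap f) (lap f) / (1 / T)"
      using deg_inner_abs_le_weighted[of "1 / T" g "lap f"] T by simp
    also have "\<dots> \<le> dirichlet f + T * deg_inner (lap f) (lap f)"
      using gg T by (simp add: divide_le_eq mult.commute)
    finally show ?thesis by simp
  qed
  then show ?thesis
    using T by blast
qed


lemma uniform_lyap_contraction:
  assumes "0 < A" "0 < B"
  obtains c \<kappa> \<epsilon>0 where "0 < c" "c \<le> 1/2" "c \<le> A/8" "0 < \<kappa>" "0 < \<epsilon>0" "\<epsilon>0 * \<kappa> < 1"
    and "\<And>a b \<epsilon> x u. A/2 \<le> a \<Longrightarrow> a \<le> A \<Longrightarrow> B/2 \<le> b \<Longrightarrow> b \<le> B' \<Longrightarrow> 0 < \<epsilon> \<Longrightarrow> \<epsilon> \<le> \<epsilon>0 \<Longrightarrow>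
           lyap a c (step_pos \<epsilon> a b x u) (step_vel \<epsilon> a b x u) \<le> (1 - \<epsilon> * \<kappa>) * lyap a c x u"
proof -
  obtain G where "G > 0" and gap: "\<And>f. dirichlet f \<le> G * deg_inner (lap f) (lap f)"
    using spectral_gap by blast
  define D where "D = 4 + 2 * B'^2 / A"
  define c where "c = min (min (A/8) (1/2)) (B / (2 * D))"
  define \<kappa>0 where "\<kappa>0 = min (c * A / (2 * G)) (B/2)"
  define R where "R = (A + 2) * (12 * A^2 + 6 * B'^2 + 5)"
  define \<kappa> where "\<kappa> = \<kappa>0 / (2 * (A + 2))"
  define \<epsilon>0 where "\<epsilon>0 = min 1 (min (\<kappa>0 / (2 * R)) (1 / (2 * \<kappa>)))"
  have "D > 0"
    using assms by (simp add: D_def add_pos_nonneg)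
  then have "0 < c"
    using assms by (simp add: c_def)
  have "c \<le> min (A/8) (1/2)"
    unfolding c_def by (rule min.cobounded1)
  then have "c \<le> 1/2" "c \<le> A/8"
    by simp_all
  have "c \<le> B / (2 * D)"
    unfolding c_def by (rule min.cobounded2)
  then have "c * D \<le> B/2"
    using \<open>D > 0\<close> by (simp add: le_divide_eq algebra_simps)
  from \<open>0 < c\<close> have "0 < \<kappa>0" "0 < \<kappa>" "0 < R"
    using assms \<open>G > 0\<close> by (simp_all add: \<kappa>0_def \<kappa>_def R_def add_pos_nonneg)
  then have "0 < \<epsilon>0"
    by (simp add: \<epsilon>0_def)
  have "\<epsilon>0 \<le> 1 / (2 * \<kappa>)"
    unfolding \<epsilon>0_def by (intro min.coboundedI2 min.cobounded2)
  then have "\<epsilon>0 * \<kappa> < 1"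
    using \<open>0 < \<kappa>\<close> by (simp add: field_simps)
  have "\<epsilon>0 * R \<le> \<kappa>0 / (2 * R) * R"
    using \<open>0 < R\<close> unfolding \<epsilon>0_def by (intro mult_right_mono min.coboundedI2 min.cobounded1) auto
  then have "\<epsilon>0 * R \<le> \<kappa>0 / 2"
    using \<open>0 < R\<close> by simp
  then have "\<epsilon> * R \<le> \<kappa>0 / 2" if "\<epsilon> \<le> \<epsilon>0" for \<epsilon>
    using mult_right_mono[OF that less_imp_le[OF \<open>0 < R\<close>]] \<open>\<epsilon>0 * R \<le> \<kappa>0 / 2\<close> by linarith
  moreover have "\<epsilon> \<le> 1" if "\<epsilon> \<le> \<epsilon>0" for \<epsilon>
    using that by (simp add: \<epsilon>0_def)
  moreover have "\<kappa>0 \<le> c * A / (2 * G)" "\<kappa>0 \<le> B/2"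
    by (simp_all add: \<kappa>0_def)
  ultimately have "lyap a c (step_pos \<epsilon> a b x u) (step_vel \<epsilon> a b x u) \<le> (1 - \<epsilon> * \<kappa>) * lyap a c x u"
    if "A/2 \<le> a" "a \<le> A" "B/2 \<le> b" "b \<le> B'" "0 < \<epsilon>" "\<epsilon> \<le> \<epsilon>0" for a b \<epsilon> x u
    using lyap_step_contraction_on_box[OF assms that(1-4) \<open>0 < c\<close> \<open>c \<le> 1/2\<close> \<open>c \<le> A/8\<close>
        \<open>c * D \<le> B/2\<close>[unfolded D_def] \<open>G > 0\<close> gap] that \<open>0 < \<kappa>0\<close>
    by (simp add: \<kappa>_def R_def)
  then show ?thesis
    using that[OF \<open>0 < c\<close> \<open>c \<le> 1/2\<close> \<open>c \<le> A/8\<close> \<open>0 < \<kappa>\<close> \<open>0 < \<epsilon>0\<close> \<open>\<epsilon>0 * \<kappa> < 1\<close>] by blast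
qed

end

lemma mpc_cost_eq_quadratic:
  assumes "finite Nb" "Nb \<noteq> {}"
  shows "mpc_cost w1 w2 w3 h Nb prev d0 dd0 u
    = w1 * (d0 + h * dd0 + h^2/2 * u)^2
      - 2 * w1 * (d0 + h * dd0 + h^2/2 * u) * ((\<Sum>j\<in>Nb. prev j) / real (card Nb))
      + w1 * (\<Sum>j\<in>Nb. (prev j)^2) / real (card Nb) + w2 * (dd0 + h * u)^2 + w3 * u^2"
proof -
  define p where "p = d0 + h * dd0 + h^2/2 * u"
  define n where "n = real (card Nb)"
  have "n > 0"
    unfolding n_def using assms by (simp add: card_gt_0_iff)
  have "(\<Sum>j\<in>Nb. (p - prev j)^2) = (\<Sum>j\<in>Nb. p^2 - 2 * p * prev j + (prev j)^2)"
    by (simp add: power2_eq_square algebra_simps)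
  also have "\<dots> = n * p^2 - 2 * p * (\<Sum>j\<in>Nb. prev j) + (\<Sum>j\<in>Nb. (prev j)^2)"
    unfolding n_def by (simp add: sum.distrib sum_subtractf sum_distrib_left)
  finally have sq: "(\<Sum>j\<in>Nb. (p - prev j)^2) = n * p^2 - 2 * p * (\<Sum>j\<in>Nb. prev j) + (\<Sum>j\<in>Nb. (prev j)^2)" .
  show ?thesis
    unfolding mpc_cost_def p_def[symmetric] n_def[symmetric] sq using \<open>n > 0\<close>
    by (simp add: field_simps)
qed

lemma mpc_input_eq:
  assumes "finite Nb" "Nb \<noteq> {}" "w1 > 0" "w2 > 0" "w3 > 0"
  shows "mpc_input w1 w2 w3 h Nb prev d0 dd0
    = - (w1 * h^2/2 * (d0 + h * dd0 - (\<Sum>j\<in>Nb. prev j) / real (card Nb)) + w2 * h * dd0)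
        / (w3 + w2 * h^2 + w1 * h^4/4)"
proof -
  define m where "m = (\<Sum>j\<in>Nb. prev j) / real (card Nb)"
  define D where "D = w3 + w2 * h^2 + w1 * h^4/4"
  define u0 where "u0 = - (w1 * h^2/2 * (d0 + h * dd0 - m) + w2 * h * dd0) / D"
  have "D > 0"
    unfolding D_def using assms by (simp add: add_pos_nonneg)
  have cost_diff: "mpc_cost w1 w2 w3 h Nb prev d0 dd0 u - mpc_cost w1 w2 w3 h Nb prev d0 dd0 u0
      = D * (u - u0)^2" for u
  proof -
    have "D * u0 = - (w1 * h^2/2 * (d0 + h * dd0 - m) + w2 * h * dd0)"
      unfolding u0_def using \<open>D > 0\<close> by simp
    moreover have "h^4 = h^2 * h^2"
      by simp
    ultimately show ?thesis
      unfolding mpc_cost_eq_quadratic[OF assms(1,2)] m_def[symmetric] D_def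
      by (simp add: field_simps power2_eq_square) algebra
  qed
  have "mpc_input w1 w2 w3 h Nb prev d0 dd0 = u0"
    unfolding mpc_input_def
  proof (rule the_equality)
    show "\<forall>v. mpc_cost w1 w2 w3 h Nb prev d0 dd0 u0 \<le> mpc_cost w1 w2 w3 h Nb prev d0 dd0 v"
      using cost_diff \<open>D > 0\<close> by (smt (verit) mult_nonneg_nonneg zero_le_power2)
    fix u
    assume "\<forall>v. mpc_cost w1 w2 w3 h Nb prev d0 dd0 u \<le> mpc_cost w1 w2 w3 h Nb prev d0 dd0 v"
    then have "mpc_cost w1 w2 w3 h Nb prev d0 dd0 u \<le> mpc_cost w1 w2 w3 h Nb prev d0 dd0 u0"
      by blast
    then have "D * (u - u0)^2 \<le> 0"
      using cost_diff[of u] by linarith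
    then show "u = u0"
      using \<open>D > 0\<close> by (simp add: mult_le_0_iff)
  qed
  then show ?thesis
    unfolding u0_def D_def m_def .
qed

definition mpc_gain_pos :: "real \<Rightarrow> real \<Rightarrow> real \<Rightarrow> real \<Rightarrow> real" where
  "mpc_gain_pos w1 w2 w3 h = w1 / (2 * (w3 + w2 * h^2 + w1 * h^4 / 4))"

definition mpc_gain_vel :: "real \<Rightarrow> real \<Rightarrow> real \<Rightarrow> real \<Rightarrow> real" where
  "mpc_gain_vel w1 w2 w3 h = (w2 + w1 * h^2 / 2) / (w3 + w2 * h^2 + w1 * h^4 / 4)"

lemma mpc_gain_bounds:
  assumes "w1 > 0" "w2 > 0" "w3 > 0" "h^2 \<le> 1" "h^2 \<le> w3 / (w2 + w1)"
  shows "w1 / (2 * w3) / 2 \<le> mpc_gain_pos w1 w2 w3 h" "mpc_gain_pos w1 w2 w3 h \<le> w1 / (2 * w3)"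
    and "w2 / w3 / 2 \<le> mpc_gain_vel w1 w2 w3 h" "mpc_gain_vel w1 w2 w3 h \<le> (w2 + w1) / w3"
proof -
  define D where "D = w3 + w2 * h^2 + w1 * h^4 / 4"
  have h4: "h^4 = (h^2)^2"
    by simp
  have "h^2 * h^2 \<le> 1 * h^2"
    using assms(4) by (intro mult_right_mono) auto
  then have "h^4 \<le> h^2"
    unfolding h4 by (simp add: power2_eq_square)
  moreover have "w2 * h^2 + w1 * h^2 \<le> w3"
    using assms by (simp add: le_divide_eq algebra_simps)
  moreover have "w1 * h^4 \<le> w1 * h^2"
    using \<open>h^4 \<le> h^2\<close> assms(1) by (intro mult_left_mono) auto
  ultimately have D_le: "D \<le> 2 * w3"
    unfolding D_def using mult_nonneg_nonneg[of w1 "h^2"] assms(1) zero_le_power2[of h] by linarith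
  have D_ge: "w3 \<le> D"
    unfolding D_def using assms by simp
  have num: "w2 \<le> w2 + w1 * h^2 / 2" "w2 + w1 * h^2 / 2 \<le> w2 + w1"
    using assms by auto
  show "w1 / (2 * w3) / 2 \<le> mpc_gain_pos w1 w2 w3 h" "mpc_gain_pos w1 w2 w3 h \<le> w1 / (2 * w3)"
    unfolding mpc_gain_pos_def D_def[symmetric] using assms D_le D_ge
    by (simp_all add: field_simps mult_left_mono)
  have "w2 / w3 / 2 = w2 / (2 * w3)"
    by simp
  also have "\<dots> \<le> (w2 + w1 * h^2 / 2) / D"
    using num D_le D_ge assms by (intro frac_le) auto
  finally show "w2 / w3 / 2 \<le> mpc_gain_vel w1 w2 w3 h"
    unfolding mpc_gain_vel_def D_def .
  have "(w2 + w1 * h^2 / 2) / D \<le> (w2 + w1) / w3"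
    using num D_ge assms by (intro frac_le) auto
  then show "mpc_gain_vel w1 w2 w3 h \<le> (w2 + w1) / w3"
    unfolding mpc_gain_vel_def D_def .
qed

locale mpc_run = connected_graph E for E :: "'a::finite \<Rightarrow> 'a \<Rightarrow> bool" +
  fixes w1 w2 w3 h :: real and alpha :: "nat \<Rightarrow> 'a \<Rightarrow> real" and x0 v0 :: "'a \<Rightarrow> real"
  assumes weights_pos: "w1 > 0" "w2 > 0" "w3 > 0" and step_size_pos: "h > 0"
begin

abbreviation "ga \<equiv> mpc_gain_pos w1 w2 w3 h"
abbreviation "gb \<equiv> mpc_gain_vel w1 w2 w3 h"

definition pos :: "nat \<Rightarrow> 'a \<Rightarrow> real" where
  "pos k i = fst (mpc_state w1 w2 w3 h E alpha x0 v0 k i)"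

definition vel :: "nat \<Rightarrow> 'a \<Rightarrow> real" where
  "vel k i = snd (mpc_state w1 w2 w3 h E alpha x0 v0 k i) / h"

lemma mpc_input_step:
  "mpc_input w1 w2 w3 h (nbrs E i) (\<lambda>j. pos k j) (pos k i - alpha (Suc k) i) (h * vel k i)
     = h^2 * (ga * alpha (Suc k) i - feedback ga gb (pos k) (vel k) i)"
proof -
  have mean: "(\<Sum>j\<in>nbrs E i. pos k j) / real (card (nbrs E i)) = pos k i - lap (pos k) i"
    by (simp add: lap_def deg_def)
  define D where "D = w3 + w2 * h^2 + w1 * h^4 / 4"
  have "D > 0"
    unfolding D_def using weights_pos by (simp add: add_pos_nonneg)
  have gains: "ga = w1 / (2 * D)" "gb = (w2 + w1 * h^2 / 2) / D"
    by (simp_all add: D_def mpc_gain_pos_def mpc_gain_vel_def)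
  show ?thesis
    unfolding mpc_input_eq[OF finite nbrs_nonempty weights_pos] mean D_def[symmetric] gains
    using \<open>D > 0\<close> by (simp add: feedback_def field_simps power2_eq_square)
qed

lemma pos_Suc:
  "pos (Suc k) i = step_pos (h^2) ga gb (pos k) (vel k) i - (1 - (h^2)^2 * ga / 2) * alpha (Suc k) i"
proof -
  have "pos (Suc k) i = pos k i - alpha (Suc k) i + h * (h * vel k i)
      + h^2 / 2 * mpc_input w1 w2 w3 h (nbrs E i) (pos k) (pos k i - alpha (Suc k) i) (h * vel k i)"
    using step_size_pos by (simp add: pos_def[abs_def] vel_def Let_def)
  then show ?thesis
    by (simp add: mpc_input_step step_pos_def power2_eq_square algebra_simps)
qed

lemma vel_Suc:
  "vel (Suc k) i = step_vel (h^2) ga gb (pos k) (vel k) i + h^2 * ga * alpha (Suc k) i"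
proof -
  have "vel (Suc k) i
      = vel k i + mpc_input w1 w2 w3 h (nbrs E i) (pos k) (pos k i - alpha (Suc k) i) (h * vel k i)"
    using step_size_pos by (simp add: pos_def[abs_def] vel_def Let_def add_divide_distrib)
  then show ?thesis
    by (simp add: mpc_input_step step_vel_def algebra_simps)
qed


lemma sqrt_lyap_recursion:
  assumes "0 \<le> c" "c \<le> 1/2" "2 * c \<le> ga" "0 \<le> \<theta>"
    and contraction: "\<And>x u. lyap ga c (step_pos (h^2) ga gb x u) (step_vel (h^2) ga gb x u)
                              \<le> \<theta> * lyap ga c x u"
    and alpha: "\<And>k i. \<bar>alpha (Suc k) i\<bar> \<le> \<delta> (Suc k)"
  obtains C where "C \<ge> 0" and "\<And>k. sqrt (lyap ga c (pos (Suc k)) (vel (Suc k)))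
                      \<le> sqrt \<theta> * sqrt (lyap ga c (pos k) (vel k)) + C * \<delta> (Suc k)"
proof -
  define p where "p = - (1 - (h^2)^2 * ga / 2)"
  define q where "q = h^2 * ga"
  define C where "C = sqrt ((ga + 2) * (2 * p^2 + q^2) * (\<Sum>i\<in>UNIV. deg i))"
  have "ga \<ge> 0"
    using assms by simp
  have "0 \<le> \<delta> (Suc k)" for k
    using alpha[of k] by (meson abs_ge_zero order_trans)
  have "(\<Sum>i\<in>UNIV. deg i) \<ge> 0"
    using deg_pos by (simp add: sum_nonneg less_imp_le)
  then have C2: "C^2 = (ga + 2) * (2 * p^2 + q^2) * (\<Sum>i\<in>UNIV. deg i)"
    unfolding C_def using \<open>ga \<ge> 0\<close> by simp
  have "C \<ge> 0"
    unfolding C_def using \<open>ga \<ge> 0\<close> \<open>(\<Sum>i\<in>UNIV. deg i) \<ge> 0\<close> by simp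
  have "sqrt (lyap ga c (pos (Suc k)) (vel (Suc k)))
          \<le> sqrt \<theta> * sqrt (lyap ga c (pos k) (vel k)) + C * \<delta> (Suc k)" for k
  proof -
    have "pos (Suc k) = (\<lambda>i. step_pos (h^2) ga gb (pos k) (vel k) i + p * alpha (Suc k) i)"
      by (simp add: fun_eq_iff pos_Suc p_def algebra_simps)
    moreover have "vel (Suc k) = (\<lambda>i. step_vel (h^2) ga gb (pos k) (vel k) i + q * alpha (Suc k) i)"
      by (simp add: fun_eq_iff vel_Suc q_def)
    ultimately have "sqrt (lyap ga c (pos (Suc k)) (vel (Suc k)))
        \<le> sqrt (lyap ga c (step_pos (h^2) ga gb (pos k) (vel k)) (step_vel (h^2) ga gb (pos k) (vel k)))
          + sqrt (lyap ga c (\<lambda>i. p * alpha (Suc k) i) (\<lambda>i. q * alpha (Suc k) i))"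
      using sqrt_lyap_add_le assms by simp
    also have "\<dots> \<le> sqrt (\<theta> * lyap ga c (pos k) (vel k)) + sqrt (C^2 * \<delta> (Suc k)^2)"
      using contraction lyap_scaled_le[OF \<open>ga \<ge> 0\<close> \<open>0 \<le> c\<close> \<open>c \<le> 1/2\<close> alpha] unfolding C2
      by (intro add_mono real_sqrt_le_mono) (simp_all add: mult.assoc)
    finally show ?thesis
      using \<open>0 \<le> \<delta> (Suc k)\<close> \<open>C \<ge> 0\<close> by (simp add: real_sqrt_mult)
  qed
  then show ?thesis
    using that \<open>C \<ge> 0\<close> by blast
qed


lemma sqrt_lyap_geometric:
  assumes "0 < c" "c \<le> 1/2" "4 * c \<le> ga" "0 \<le> \<theta>" "\<theta> < 1"
    and contraction: "\<And>x u. lyap ga c (step_pos (h^2) ga gb x u) (step_vel (h^2) ga gb x u)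
                              \<le> \<theta> * lyap ga c x u"
    and "0 < \<rho>" "\<rho> < 1" "0 \<le> d" and alpha: "\<And>k i. \<bar>alpha (Suc k) i\<bar> \<le> d * \<rho>^(Suc k)"
  obtains r M where "\<rho> \<le> r" "r < 1" "M > 0" "\<And>k. sqrt (lyap ga c (pos k) (vel k)) \<le> M * r^k"
proof -
  define W where "W k = sqrt (lyap ga c (pos k) (vel k))" for k
  have "0 \<le> c" "2 * c \<le> ga"
    using assms by simp_all
  obtain C where "C \<ge> 0" and rec: "\<And>k. W (Suc k) \<le> sqrt \<theta> * W k + C * (d * \<rho>^(Suc k))"
    using sqrt_lyap_recursion[where \<delta> = "\<lambda>k. d * \<rho>^k",
        OF \<open>0 \<le> c\<close> \<open>c \<le> 1/2\<close> \<open>2 * c \<le> ga\<close> \<open>0 \<le> \<theta>\<close> contraction alpha]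
    unfolding W_def by blast
  have "W k \<ge> 0" for k
    unfolding W_def using \<open>0 \<le> c\<close> \<open>c \<le> 1/2\<close> \<open>2 * c \<le> ga\<close> by (simp add: lyap_nonneg)
  moreover have "W (Suc k) \<le> sqrt \<theta> * W k + (C * d) * \<rho>^(Suc k)" for k
    using rec[of k] by (simp add: mult.assoc)
  moreover have "0 \<le> sqrt \<theta>" "sqrt \<theta> < 1" "0 \<le> C * d"
    using \<open>0 \<le> \<theta>\<close> \<open>\<theta> < 1\<close> \<open>C \<ge> 0\<close> \<open>0 \<le> d\<close> by simp_all
  ultimately obtain r M where "\<rho> \<le> r" "r < 1" "M > 0" "\<And>k. W k \<le> M * r^k"
    using geometric_decay_of_recursion[where W = W and \<sigma> = "sqrt \<theta>" and C = "C * d" and \<rho> = \<rho>]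
      \<open>0 < \<rho>\<close> \<open>\<rho> < 1\<close> by blast
  then show ?thesis
    using that unfolding W_def by blast
qed

lemma pos_vel_geometric:
  assumes "0 < c" "c \<le> 1/2" "4 * c \<le> ga" "0 \<le> \<theta>" "\<theta> < 1"
    and contraction: "\<And>x u. lyap ga c (step_pos (h^2) ga gb x u) (step_vel (h^2) ga gb x u)
                              \<le> \<theta> * lyap ga c x u"
    and "0 < \<rho>" "\<rho> < 1" "0 \<le> d" and alpha: "\<And>k i. \<bar>alpha (Suc k) i\<bar> \<le> d * \<rho>^(Suc k)"
  obtains r M where "\<rho> \<le> r" "r < 1" "M > 0"
    and "\<And>k i j. \<bar>pos k i - pos k j\<bar> \<le> M * r^k" and "\<And>k i. \<bar>vel k i\<bar> \<le> M * r^k"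
proof -
  obtain r M0 where r: "\<rho> \<le> r" "r < 1" and "M0 > 0"
    and W: "\<And>k. sqrt (lyap ga c (pos k) (vel k)) \<le> M0 * r^k"
    using sqrt_lyap_geometric[OF assms] by blast
  define m where "m = min (ga / 2) (1 / 2)"
  have "m > 0"
    using assms by (simp add: m_def)
  obtain K where "K \<ge> 0" and K: "\<And>f i j. \<bar>f i - f j\<bar> \<le> K * sqrt (dirichlet f)"
    using oscillation_le by blast
  define M where "M = (K + 1) * M0 / sqrt m"
  have energy: "sqrt (dirichlet (pos k) + deg_inner (vel k) (vel k)) \<le> M0 / sqrt m * r^k" for k
  proof -
    have "dirichlet (pos k) + deg_inner (vel k) (vel k) \<le> lyap ga c (pos k) (vel k) / m"
      using energy_le_lyap[of c ga "pos k" "vel k"] assms \<open>m > 0\<close> by (simp add: m_def field_simps)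
    then have "sqrt (dirichlet (pos k) + deg_inner (vel k) (vel k)) \<le> sqrt (lyap ga c (pos k) (vel k)) / sqrt m"
      by (simp add: real_sqrt_divide[symmetric])
    also have "\<dots> \<le> M0 * r^k / sqrt m"
      using W[of k] \<open>m > 0\<close> by (simp add: divide_right_mono)
    finally show ?thesis
      by simp
  qed
  have "0 \<le> M0 / sqrt m * r^k" for k
    using \<open>M0 > 0\<close> \<open>m > 0\<close> r \<open>0 < \<rho>\<close> by simp
  moreover have "M * r^k = K * (M0 / sqrt m * r^k) + M0 / sqrt m * r^k" for k
    by (simp add: M_def algebra_simps add_divide_distrib)
  ultimately have M_ge: "K * (M0 / sqrt m * r^k) \<le> M * r^k" "M0 / sqrt m * r^k \<le> M * r^k" for k
    using mult_nonneg_nonneg[OF \<open>K \<ge> 0\<close>] by (smt (verit))+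
  have "\<bar>pos k i - pos k j\<bar> \<le> M * r^k" for k i j
  proof -
    have "sqrt (dirichlet (pos k)) \<le> M0 / sqrt m * r^k"
      using energy[of k] deg_inner_self_nonneg[of "vel k"] by (meson le_add_same_cancel1 order_trans real_sqrt_le_mono)
    then show ?thesis
      using K[of "pos k" i j] mult_left_mono[OF _ \<open>K \<ge> 0\<close>] M_ge(1)[of k] by (meson order_trans)
  qed
  moreover have "\<bar>vel k i\<bar> \<le> M * r^k" for k i
  proof -
    have "\<bar>vel k i\<bar> \<le> sqrt (deg_inner (vel k) (vel k))"
      using sq_le_deg_inner[of "vel k" i] by (simp add: real_le_rsqrt)
    also have "\<dots> \<le> sqrt (dirichlet (pos k) + deg_inner (vel k) (vel k))"
      using dirichlet_nonneg[of "pos k"] by simp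
    finally show ?thesis
      using energy[of k] M_ge(2)[of k] by linarith
  qed
  moreover have "M > 0"
    using \<open>M0 > 0\<close> \<open>m > 0\<close> \<open>K \<ge> 0\<close> by (simp add: M_def add_nonneg_pos)
  ultimately show ?thesis
    using that r by blast
qed

lemma mpc_delta0_geometric:
  assumes "0 < c" "c \<le> 1/2" "4 * c \<le> ga" "0 \<le> \<theta>" "\<theta> < 1"
    and contraction: "\<And>x u. lyap ga c (step_pos (h^2) ga gb x u) (step_vel (h^2) ga gb x u)
                              \<le> \<theta> * lyap ga c x u"
    and "0 < \<rho>" "\<rho> < 1" "0 \<le> d" and alpha: "\<And>k i. \<bar>alpha (Suc k) i\<bar> \<le> d * \<rho>^(Suc k)"
  shows "(\<exists>r M Md. 0 < r \<and> r < 1 \<and> M > 0 \<and> Md > 0 \<and>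
           (\<forall>k\<ge>1. \<forall>i j.
              \<bar>mpc_delta0 w1 w2 w3 h E alpha x0 v0 k i - mpc_delta0 w1 w2 w3 h E alpha x0 v0 k j\<bar>
                \<le> M * r ^ k \<and>
              \<bar>mpc_ddelta0 w1 w2 w3 h E alpha x0 v0 k i\<bar> \<le> Md * r ^ k)) \<and>
         (\<forall>i j. (\<lambda>k. mpc_delta0 w1 w2 w3 h E alpha x0 v0 k i - mpc_delta0 w1 w2 w3 h E alpha x0 v0 k j)
                   \<longlonglongrightarrow> 0) \<and>
         (\<forall>i. (\<lambda>k. mpc_ddelta0 w1 w2 w3 h E alpha x0 v0 k i) \<longlonglongrightarrow> 0)"
proof -
  obtain r M where r: "\<rho> \<le> r" "r < 1" and "M > 0"
    and pos: "\<And>k i j. \<bar>pos k i - pos k j\<bar> \<le> M * r^k" and vel: "\<And>k i. \<bar>vel k i\<bar> \<le> M * r^k"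
    using pos_vel_geometric[OF assms] by blast
  have "r > 0"
    using r \<open>0 < \<rho>\<close> by simp
  have delta: "\<bar>mpc_delta0 w1 w2 w3 h E alpha x0 v0 k i - mpc_delta0 w1 w2 w3 h E alpha x0 v0 k j\<bar>
      \<le> (M / r + 2 * d) * r ^ k" if "k \<ge> 1" for k i j
  proof -
    obtain n where k: "k = Suc n"
      using \<open>k \<ge> 1\<close> by (cases k) auto
    have "d * \<rho>^k \<le> d * r^k"
      using r \<open>0 < \<rho>\<close> \<open>0 \<le> d\<close> by (intro mult_left_mono power_mono) auto
    then have "\<bar>pos n i - alpha k i - (pos n j - alpha k j)\<bar> \<le> M * r^n + 2 * (d * r^k)"
      using pos[of n i j] alpha[of n i] alpha[of n j] unfolding k by linarith
    also have "\<dots> = (M / r + 2 * d) * r ^ k"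
      using \<open>r > 0\<close> unfolding k by (simp add: field_simps)
    finally show ?thesis
      by (simp add: k mpc_delta0_def pos_def)
  qed
  have ddelta: "\<bar>mpc_ddelta0 w1 w2 w3 h E alpha x0 v0 k i\<bar> \<le> (h * M / r) * r ^ k" if "k \<ge> 1" for k i
  proof -
    obtain n where k: "k = Suc n"
      using \<open>k \<ge> 1\<close> by (cases k) auto
    have "\<bar>h * vel n i\<bar> \<le> h * (M * r^n)"
      using vel[of n i] step_size_pos by (simp add: abs_mult)
    then show ?thesis
      using \<open>r > 0\<close> step_size_pos by (simp add: k mpc_ddelta0_def vel_def field_simps)
  qed
  have "M / r + 2 * d > 0" "h * M / r > 0"
    using \<open>M > 0\<close> \<open>r > 0\<close> \<open>0 \<le> d\<close> step_size_pos by (simp_all add: add_pos_nonneg)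
  moreover have
    "(\<lambda>k. mpc_delta0 w1 w2 w3 h E alpha x0 v0 k i - mpc_delta0 w1 w2 w3 h E alpha x0 v0 k j) \<longlonglongrightarrow> 0"
    for i j
    using delta \<open>r > 0\<close> r by (intro tendsto_zero_of_geometric_bound) auto
  moreover have "(\<lambda>k. mpc_ddelta0 w1 w2 w3 h E alpha x0 v0 k i) \<longlonglongrightarrow> 0" for i
    using ddelta \<open>r > 0\<close> r by (intro tendsto_zero_of_geometric_bound[where M = "h * M / r"]) auto
  moreover have "\<forall>k\<ge>1. \<forall>i j.
      \<bar>mpc_delta0 w1 w2 w3 h E alpha x0 v0 k i - mpc_delta0 w1 w2 w3 h E alpha x0 v0 k j\<bar>
        \<le> (M / r + 2 * d) * r ^ k \<and>
      \<bar>mpc_ddelta0 w1 w2 w3 h E alpha x0 v0 k i\<bar> \<le> (h * M / r) * r ^ k"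
    using delta ddelta by blast
  ultimately show ?thesis
    using \<open>r > 0\<close> r by blast
qed

end

context connected_graph
begin

lemma mpc_geometric_bounds:
  assumes "w1 > 0" "w2 > 0" "w3 > 0" "d > 0" "\<nu> > 0"
  shows "\<exists>h0>0. \<forall>h. 0 < h \<and> h < h0 \<longrightarrow>
          (\<forall>(x0 :: 'a \<Rightarrow> real) (v0 :: 'a \<Rightarrow> real) (alpha :: nat \<Rightarrow> 'a \<Rightarrow> real).
            (\<forall>i. \<forall>k\<ge>1. \<bar>alpha k i\<bar> \<le> d * exp (- \<nu> * real k * h)) \<longrightarrow>
            (\<exists>r M Md. 0 < r \<and> r < 1 \<and> M > 0 \<and> Md > 0 \<and>
               (\<forall>k\<ge>1. \<forall>i j.
                  \<bar>mpc_delta0 w1 w2 w3 h E alpha x0 v0 k i - mpc_delta0 w1 w2 w3 h E alpha x0 v0 k j\<bar>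
                    \<le> M * r ^ k \<and>
                  \<bar>mpc_ddelta0 w1 w2 w3 h E alpha x0 v0 k i\<bar> \<le> Md * r ^ k)) \<and>
            (\<forall>i j. (\<lambda>k. mpc_delta0 w1 w2 w3 h E alpha x0 v0 k i - mpc_delta0 w1 w2 w3 h E alpha x0 v0 k j)
                      \<longlonglongrightarrow> 0) \<and>
            (\<forall>i. (\<lambda>k. mpc_ddelta0 w1 w2 w3 h E alpha x0 v0 k i) \<longlonglongrightarrow> 0))"
proof -
  define A where "A = w1 / (2 * w3)"
  define B where "B = w2 / w3"
  define B' where "B' = (w2 + w1) / w3"
  obtain c \<kappa> \<epsilon>0 where c: "0 < c" "c \<le> 1/2" "c \<le> A/8" and "0 < \<kappa>" "0 < \<epsilon>0" "\<epsilon>0 * \<kappa> < 1"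
    and contraction: "\<And>a b \<epsilon> x u. A/2 \<le> a \<Longrightarrow> a \<le> A \<Longrightarrow> B/2 \<le> b \<Longrightarrow> b \<le> B' \<Longrightarrow> 0 < \<epsilon> \<Longrightarrow>
        \<epsilon> \<le> \<epsilon>0 \<Longrightarrow> lyap a c (step_pos \<epsilon> a b x u) (step_vel \<epsilon> a b x u) \<le> (1 - \<epsilon> * \<kappa>) * lyap a c x u"
    using uniform_lyap_contraction[of A B B'] assms by (auto simp: A_def B_def)
  define h0 where "h0 = min (sqrt \<epsilon>0) (min 1 (sqrt (w3 / (w2 + w1))))"
  have "h0 > 0"
    using assms \<open>0 < \<epsilon>0\<close> by (simp add: h0_def)
  have sq_less: "h^2 < z" if "0 < h" "h < sqrt z" "0 \<le> z" for h z :: real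
    using power_strict_mono[of h "sqrt z" 2] that by simp
  show ?thesis
    apply (rule exI[of _ h0], rule conjI[OF \<open>h0 > 0\<close>], intro allI impI)
    subgoal premises prems for h x0 v0 alpha
    proof -
      have h: "0 < h" "h < h0" and alpha: "\<forall>i. \<forall>k\<ge>1. \<bar>alpha k i\<bar> \<le> d * exp (- \<nu> * real k * h)"
        using prems by auto
      interpret run: mpc_run E w1 w2 w3 h alpha x0 v0
        using assms h by unfold_locales auto
      have "h^2 < \<epsilon>0" "h^2 < 1" "h^2 < w3 / (w2 + w1)"
        using h sq_less[of h] assms \<open>0 < \<epsilon>0\<close> by (auto simp: h0_def)
      then have gains: "A/2 \<le> run.ga" "run.ga \<le> A" "B/2 \<le> run.gb" "run.gb \<le> B'"
        using mpc_gain_bounds[OF assms(1-3), of h] by (simp_all add: A_def B_def B'_def)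
      have "lyap run.ga c (step_pos (h^2) run.ga run.gb x u) (step_vel (h^2) run.ga run.gb x u)
          \<le> (1 - h^2 * \<kappa>) * lyap run.ga c x u" for x u
        using contraction[OF gains] h \<open>h^2 < \<epsilon>0\<close> by simp
      moreover have "0 \<le> 1 - h^2 * \<kappa>"
        using mult_strict_right_mono[OF \<open>h^2 < \<epsilon>0\<close> \<open>0 < \<kappa>\<close>] \<open>\<epsilon>0 * \<kappa> < 1\<close> by linarith
      moreover have "1 - h^2 * \<kappa> < 1"
        using h \<open>0 < \<kappa>\<close> by simp
      moreover have "4 * c \<le> run.ga"
        using c gains by simp
      moreover have "\<bar>alpha (Suc k) i\<bar> \<le> d * exp (- \<nu> * h) ^ Suc k" for k i
      proof -
        have "exp (- \<nu> * real (Suc k) * h) = exp (- \<nu> * h) ^ Suc k"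
          using exp_of_nat_mult[of "Suc k" "- \<nu> * h"] by (simp add: mult_ac)
        moreover have "\<bar>alpha (Suc k) i\<bar> \<le> d * exp (- \<nu> * real (Suc k) * h)"
          using alpha by force
        ultimately show ?thesis
          by simp
      qed
      moreover have "0 < exp (- \<nu> * h)" "exp (- \<nu> * h) < 1" "0 \<le> d"
        using assms h by simp_all
      ultimately show ?thesis
        using run.mpc_delta0_geometric[OF c(1,2)] by blast
    qed
    done
qed

end

theorem theorem1:
  fixes E :: "'a::finite \<Rightarrow> 'a \<Rightarrow> bool"
    and w1 w2 w3 d \<nu> :: real
  assumes "CARD('a) \<ge> 2"
    and "\<And>i j. E i j \<Longrightarrow> E j i"
    and "\<And>i. \<not> E i i"
    and "\<And>i j. E\<^sup>*\<^sup>* i j"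
    and "\<And>i. nbrs E i \<noteq> {}"
    and "w1 > 0" and "w2 > 0" and "w3 > 0" and "d > 0" and "\<nu> > 0"
  shows "\<exists>h0>0. \<forall>h. 0 < h \<and> h < h0 \<longrightarrow>
          (\<forall>(x0 :: 'a \<Rightarrow> real) (v0 :: 'a \<Rightarrow> real) (alpha :: nat \<Rightarrow> 'a \<Rightarrow> real).
            (\<forall>i. \<forall>k\<ge>1. \<bar>alpha k i\<bar> \<le> d * exp (- \<nu> * real k * h)) \<longrightarrow>
            (\<exists>r M Md. 0 < r \<and> r < 1 \<and> M > 0 \<and> Md > 0 \<and>
               (\<forall>k\<ge>1. \<forall>i j.
                  \<bar>mpc_delta0 w1 w2 w3 h E alpha x0 v0 k i - mpc_delta0 w1 w2 w3 h E alpha x0 v0 k j\<bar>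
                    \<le> M * r ^ k \<and>
                  \<bar>mpc_ddelta0 w1 w2 w3 h E alpha x0 v0 k i\<bar> \<le> Md * r ^ k)) \<and>
            (\<forall>i j. (\<lambda>k. mpc_delta0 w1 w2 w3 h E alpha x0 v0 k i - mpc_delta0 w1 w2 w3 h E alpha x0 v0 k j)
                      \<longlonglongrightarrow> 0) \<and>
            (\<forall>i. (\<lambda>k. mpc_ddelta0 w1 w2 w3 h E alpha x0 v0 k i) \<longlonglongrightarrow> 0))"
proof -
  interpret connected_graph E
    using assms(2,4,5) by unfold_locales auto
  show ?thesis
    using mpc_geometric_bounds[OF assms(6-10)] .
qed

end
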